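(* Let $N\in\mathbb{N}$. For a function $f:\mathbb{R}^N\to\mathbb{R}$, $V>0$ and $p\in(0,\infty)$ define $$\|f\|_{p,V}:=\sup\Big\{\Big(\frac{1}{|\Omega|}\int_{\Omega}|f(x)|^{p}\,dx\Big)^{1/p} : \Omega\subset\mathbb{R}^N \text{ open and convex},\ |\Omega|=V\Big\},$$ and let $L^p_V:=\{f\mid \|f\|_{p,V}<\infty\}$ modulo functions vanishing almost everywhere. Let $p\in[1,\infty)$, $V>0$ and $d\in\mathbb{N}$. Then $$\|f\|_{p,d\cdot V}\leq\|f\|_{p,V}\quad\text{for all } f\in L^p_V.$$
   Context: $|\Omega|$ denotes the $N$-dimensional Lebesgue measure; functions are measurable. *)

theory Defs
  imports "HOL-Analysis.Analysis"
begin

definition ennreal_root :: "real \<Rightarrow> ennreal \<Rightarrow> ennreal" where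
  "ennreal_root p x = (if x = \<infinity> then \<infinity> else ennreal (enn2real x powr (1 / p)))"

definition mean_p :: "real \<Rightarrow> ('a::euclidean_space \<Rightarrow> real) \<Rightarrow> 'a set \<Rightarrow> ennreal" where
  "mean_p p f \<Omega> =
     ennreal_root p (ennreal (1 / measure lebesgue \<Omega>) *
                     (\<integral>\<^sup>+ x \<in> \<Omega>. ennreal (\<bar>f x\<bar> powr p) \<partial>lebesgue))"

definition norm_pV :: "real \<Rightarrow> real \<Rightarrow> ('a::euclidean_space \<Rightarrow> real) \<Rightarrow> ennreal" where
  "norm_pV p V f = (SUP \<Omega> \<in> {\<Omega>. open \<Omega> \<and> convex \<Omega> \<and> emeasure lebesgue \<Omega> = ennreal V}. mean_p p f \<Omega>)"

end

theory Submission
  imports Defs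
begin

text \<open>
  Cutting an open convex set of measure \<open>d V\<close> by a hyperplane chosen by the intermediate value
  theorem splits it, up to a null set, into an open convex piece of measure \<open>V\<close> and one of
  measure \<open>(d - 1) V\<close>. By induction the integral of \<open>|f|\<^sup>p\<close> over the big set is a sum of \<open>d\<close>
  integrals over open convex sets of measure \<open>V\<close>, each at most \<open>V \<parallel>f\<parallel>\<^sub>p\<^sub>,\<^sub>V\<^sup>p\<close>; dividing by \<open>d V\<close>
  gives the claim.
\<close>

lemma powr_inverse_le_iff:
  fixes a m p :: real
  assumes "0 \<le> a" "0 \<le> m" "0 < p"
  shows "a powr (1 / p) \<le> m \<longleftrightarrow> a \<le> m powr p"
proof
  assume "a powr (1 / p) \<le> m"
  then have "(a powr (1 / p)) powr p \<le> m powr p" using assms by (intro powr_mono2) auto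
  then show "a \<le> m powr p" using assms by (simp add: powr_powr)
next
  assume "a \<le> m powr p"
  then have "a powr (1 / p) \<le> (m powr p) powr (1 / p)" using assms by (intro powr_mono2) auto
  then show "a powr (1 / p) \<le> m" using assms by (simp add: powr_powr)
qed

lemma mean_p_le_iff:
  fixes f :: "'a::euclidean_space \<Rightarrow> real"
  assumes \<Omega>: "emeasure lebesgue \<Omega> = ennreal W" and "0 < W" "0 < p" "0 \<le> m"
  shows "mean_p p f \<Omega> \<le> ennreal m \<longleftrightarrow>
    (\<integral>\<^sup>+ x \<in> \<Omega>. ennreal (\<bar>f x\<bar> powr p) \<partial>lebesgue) \<le> ennreal (W * m powr p)"
proof -
  define I where "I = (\<integral>\<^sup>+ x \<in> \<Omega>. ennreal (\<bar>f x\<bar> powr p) \<partial>lebesgue)"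
  have W: "measure lebesgue \<Omega> = W" using \<Omega> \<open>0 < W\<close> by (simp add: measure_def)
  show ?thesis
  proof (cases I)
    case (real i)
    have "ennreal (1 / W) * I = ennreal (i / W)"
      using real \<open>0 < W\<close> by (simp add: ennreal_mult[symmetric])
    then have "mean_p p f \<Omega> = ennreal ((i / W) powr (1 / p))"
      unfolding mean_p_def W I_def[symmetric] using real \<open>0 < W\<close> by (simp add: ennreal_root_def)
    also have "\<dots> \<le> ennreal m \<longleftrightarrow> i / W \<le> m powr p"
      using real assms by (simp add: powr_inverse_le_iff)
    also have "\<dots> \<longleftrightarrow> I \<le> ennreal (W * m powr p)"
      using real assms by (simp add: divide_simps mult.commute)
    finally show ?thesis unfolding I_def .
  next
    case top
    then have "mean_p p f \<Omega> = \<infinity>"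
      using \<open>0 < W\<close> unfolding mean_p_def W I_def[symmetric]
      by (simp add: ennreal_root_def ennreal_mult_eq_top_iff)
    then show ?thesis using top unfolding I_def by (simp add: top_unique)
  qed
qed

lemma tendsto_measure_AE_indicator:
  fixes \<Omega> :: "'a::euclidean_space set"
  assumes \<Omega>: "\<Omega> \<in> sets lebesgue" "emeasure lebesgue \<Omega> < \<infinity>"
    and A: "\<And>n. A n \<in> sets lebesgue" "\<And>n. A n \<subseteq> \<Omega>"
    and B: "B \<in> sets lebesgue" "B \<subseteq> \<Omega>"
    and lim: "AE x in lebesgue. (\<lambda>n. indicator (A n) x :: real) \<longlonglongrightarrow> indicator B x"
  shows "(\<lambda>n. measure lebesgue (A n)) \<longlonglongrightarrow> measure lebesgue B"
proof -
  have integral_indicator: "integral\<^sup>L lebesgue (indicator S :: _ \<Rightarrow> real) = measure lebesgue S"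
    if "S \<subseteq> \<Omega>" "S \<in> sets lebesgue" for S
    using emeasure_mono[OF that(1) \<Omega>(1)] \<Omega>(2) that by (simp add: less_top order_le_less_trans)
  have "(\<lambda>n. integral\<^sup>L lebesgue (indicator (A n) :: _ \<Rightarrow> real)) \<longlonglongrightarrow> integral\<^sup>L lebesgue (indicator B)"
  proof (rule integral_dominated_convergence[where w="indicator \<Omega>"])
    show "AE x in lebesgue. norm (indicator (A n) x :: real) \<le> indicator \<Omega> x" for n
      using A(2)[of n] by (auto simp: indicator_def)
  qed (use \<Omega> A B lim in auto)
  then show ?thesis using A B by (simp add: integral_indicator)
qed

lemma null_sets_hyperplane:
  fixes e :: "'a::euclidean_space"
  assumes "e \<noteq> 0"
  shows "{x. e \<bullet> x = t} \<in> null_sets lebesgue"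
  using negligible_hyperplane[of e t] assms by (simp add: negligible_iff_null_sets)

lemma continuous_on_measure_Int_halfspace:
  fixes \<Omega> :: "'a::euclidean_space set" and e :: 'a
  assumes \<Omega>: "\<Omega> \<in> sets lebesgue" "emeasure lebesgue \<Omega> < \<infinity>" and "e \<noteq> 0"
  shows "continuous_on UNIV (\<lambda>t. measure lebesgue (\<Omega> \<inter> {x. e \<bullet> x < t}))"
proof (intro continuous_at_imp_continuous_on ballI continuous_at_sequentially[THEN iffD2] allI impI)
  fix t :: real and X :: "nat \<Rightarrow> real"
  assume X: "X \<longlonglongrightarrow> t"
  have "AE x in lebesgue.
    (\<lambda>n. indicator (\<Omega> \<inter> {x. e \<bullet> x < X n}) x :: real) \<longlonglongrightarrow> indicator (\<Omega> \<inter> {x. e \<bullet> x < t}) x"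
    using AE_not_in[OF null_sets_hyperplane[OF \<open>e \<noteq> 0\<close>, of t]]
  proof eventually_elim
    fix x assume "x \<notin> {x. e \<bullet> x = t}"
    have "eventually (\<lambda>n. e \<bullet> x < X n \<longleftrightarrow> e \<bullet> x < t) sequentially"
    proof (cases "e \<bullet> x < t")
      case True
      then show ?thesis using order_tendstoD(1)[OF X True] by (auto elim: eventually_mono)
    next
      case False
      then have gt: "t < e \<bullet> x" using \<open>x \<notin> {x. e \<bullet> x = t}\<close> by auto
      show ?thesis using order_tendstoD(2)[OF X gt] False by (auto elim: eventually_mono)
    qed
    then show "(\<lambda>n. indicator (\<Omega> \<inter> {x. e \<bullet> x < X n}) x :: real)
      \<longlonglongrightarrow> indicator (\<Omega> \<inter> {x. e \<bullet> x < t}) x"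
      by (intro tendsto_eventually) (auto elim!: eventually_mono simp: indicator_def)
  qed
  then show "((\<lambda>t. measure lebesgue (\<Omega> \<inter> {x. e \<bullet> x < t})) \<circ> X)
    \<longlonglongrightarrow> measure lebesgue (\<Omega> \<inter> {x. e \<bullet> x < t})"
    unfolding o_def using \<Omega> by (intro tendsto_measure_AE_indicator) (auto simp: borel_open)
qed

lemma exists_halfspace_Int_measure_eq:
  fixes \<Omega> :: "'a::euclidean_space set" and e :: 'a
  assumes \<Omega>: "\<Omega> \<in> sets lebesgue" "emeasure lebesgue \<Omega> = ennreal W"
    and "e \<noteq> 0" and "0 < V" "V < W"
  shows "\<exists>t. measure lebesgue (\<Omega> \<inter> {x. e \<bullet> x < t}) = V"
proof -
  define g where "g t = measure lebesgue (\<Omega> \<inter> {x. e \<bullet> x < t})" for t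
  have \<Omega>_finite: "emeasure lebesgue \<Omega> < \<infinity>" using \<Omega> by simp
  have "(\<lambda>n. g (- real n)) \<longlonglongrightarrow> measure lebesgue ({} :: 'a set)"
    unfolding g_def
  proof (intro tendsto_measure_AE_indicator[OF \<Omega>(1) \<Omega>_finite] AE_I2 tendsto_eventually)
    fix x :: 'a
    obtain N :: nat where "- (e \<bullet> x) \<le> real N" using real_arch_simple by blast
    then show "\<forall>\<^sub>F n in sequentially.
      indicator (\<Omega> \<inter> {x. e \<bullet> x < - real n}) x = (indicator {} x :: real)"
      unfolding eventually_sequentially by (intro exI[of _ N]) (auto simp: indicator_def)
  qed (use \<Omega> in \<open>auto simp: borel_open\<close>)
  moreover have "(\<lambda>n. g (real n)) \<longlonglongrightarrow> measure lebesgue \<Omega>"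
    unfolding g_def
  proof (intro tendsto_measure_AE_indicator[OF \<Omega>(1) \<Omega>_finite] AE_I2 tendsto_eventually)
    fix x :: 'a
    obtain N :: nat where "e \<bullet> x + 1 \<le> real N" using real_arch_simple by blast
    then show "\<forall>\<^sub>F n in sequentially.
      indicator (\<Omega> \<inter> {x. e \<bullet> x < real n}) x = (indicator \<Omega> x :: real)"
      unfolding eventually_sequentially by (intro exI[of _ N]) (auto simp: indicator_def)
  qed (use \<Omega> in \<open>auto simp: borel_open\<close>)
  moreover have "measure lebesgue \<Omega> = W" using \<Omega> \<open>0 < V\<close> \<open>V < W\<close> by (simp add: measure_def)
  ultimately have "eventually (\<lambda>n. g (- real n) < V) sequentially"
    and "eventually (\<lambda>n. V < g (real n)) sequentially"
    using \<open>0 < V\<close> \<open>V < W\<close> by (auto intro: order_tendstoD)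
  then obtain n where "g (- real n) < V" "V < g (real n)"
    using eventually_conj eventually_happens' sequentially_bot by blast
  then have "\<exists>t. - real n \<le> t \<and> t \<le> real n \<and> g t = V"
    using continuous_on_subset[OF continuous_on_measure_Int_halfspace[OF \<Omega>(1) \<Omega>_finite \<open>e \<noteq> 0\<close>]]
    unfolding g_def by (intro IVT') auto
  then show ?thesis unfolding g_def by blast
qed

lemma open_convex_split_nn_integral:
  fixes \<Omega> :: "'a::euclidean_space set" and h :: "'a \<Rightarrow> ennreal"
  assumes h: "h \<in> borel_measurable lebesgue"
    and \<Omega>: "open \<Omega>" "convex \<Omega>" "emeasure lebesgue \<Omega> = ennreal W" and "0 < V" "V < W"
  obtains A B where "open A" "convex A" "emeasure lebesgue A = ennreal V"
    and "open B" "convex B" "emeasure lebesgue B = ennreal (W - V)"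
    and "(\<integral>\<^sup>+ x \<in> \<Omega>. h x \<partial>lebesgue) = (\<integral>\<^sup>+ x \<in> A. h x \<partial>lebesgue) + (\<integral>\<^sup>+ x \<in> B. h x \<partial>lebesgue)"
proof -
  obtain e :: 'a where "e \<in> Basis" using nonempty_Basis by blast
  then have e: "e \<noteq> 0" by auto
  obtain t where t: "measure lebesgue (\<Omega> \<inter> {x. e \<bullet> x < t}) = V"
    using exists_halfspace_Int_measure_eq[OF _ \<Omega>(3) e \<open>0 < V\<close> \<open>V < W\<close>] \<Omega>(1)
    by (auto simp: borel_open)
  define A where "A = \<Omega> \<inter> {x. e \<bullet> x < t}"
  define B where "B = \<Omega> \<inter> {x. e \<bullet> x > t}"
  define H where "H = \<Omega> \<inter> {x. e \<bullet> x = t}"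
  have A: "open A" "convex A" and B: "open B" "convex B"
    unfolding A_def B_def using \<Omega>
    by (simp_all add: open_Int convex_Int open_halfspace_lt open_halfspace_gt
        convex_halfspace_lt convex_halfspace_gt)
  have sets: "A \<in> sets lebesgue" "B \<in> sets lebesgue" using A B by (auto simp: borel_open)
  have H: "H \<in> null_sets lebesgue"
    unfolding H_def using null_sets_hyperplane[OF e] \<Omega>(1) by (auto simp: borel_open intro: null_set_Int1)
  have "\<Omega> = (A \<union> B) \<union> H" unfolding A_def B_def H_def by auto
  then have "emeasure lebesgue \<Omega> = emeasure lebesgue (A \<union> B)"
    using emeasure_Un_null_set[OF _ H, of "A \<union> B"] sets by auto
  also have "\<dots> = emeasure lebesgue A + emeasure lebesgue B"
    using sets by (intro plus_emeasure[symmetric]) (auto simp: A_def B_def)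
  finally have sum: "ennreal W = emeasure lebesgue A + emeasure lebesgue B" using \<Omega> by simp
  then have "emeasure lebesgue A \<noteq> \<infinity>" "emeasure lebesgue B \<noteq> \<infinity>" by (auto simp: top_add)
  then have measure_A: "emeasure lebesgue A = ennreal V"
    and measure_B: "emeasure lebesgue B = ennreal (measure lebesgue B)"
    using t by (auto simp: A_def emeasure_eq_ennreal_measure)
  then have "ennreal W = ennreal (V + measure lebesgue B)"
    using sum \<open>0 < V\<close> by simp
  then have "W - V = measure lebesgue B"
    using \<open>0 < V\<close> \<open>V < W\<close> by (subst (asm) ennreal_inj) auto
  then have measure_B': "emeasure lebesgue B = ennreal (W - V)" using measure_B by simp
  have "(\<integral>\<^sup>+ x \<in> \<Omega>. h x \<partial>lebesgue) = (\<integral>\<^sup>+ x. h x * indicator A x + h x * indicator B x \<partial>lebesgue)"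
    using AE_not_in[OF H]
    by (intro nn_integral_cong_AE) (auto elim!: eventually_mono simp: A_def B_def H_def indicator_def)
  also have "\<dots> = (\<integral>\<^sup>+ x \<in> A. h x \<partial>lebesgue) + (\<integral>\<^sup>+ x \<in> B. h x \<partial>lebesgue)"
    using sets h by (intro nn_integral_add) auto
  finally show thesis using that A B measure_A measure_B' by blast
qed

lemma nn_integral_open_convex_multiple_le:
  fixes h :: "'a::euclidean_space \<Rightarrow> ennreal" and d :: nat
  assumes h: "h \<in> borel_measurable lebesgue" and "0 < V" and "1 \<le> d"
    and bound: "\<And>A. open A \<Longrightarrow> convex A \<Longrightarrow> emeasure lebesgue A = ennreal V \<Longrightarrow>
      (\<integral>\<^sup>+ x \<in> A. h x \<partial>lebesgue) \<le> c"
    and \<Omega>: "open \<Omega>" "convex \<Omega>" "emeasure lebesgue \<Omega> = ennreal (real d * V)"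
  shows "(\<integral>\<^sup>+ x \<in> \<Omega>. h x \<partial>lebesgue) \<le> of_nat d * c"
  using \<open>1 \<le> d\<close> \<Omega>
proof (induction d arbitrary: \<Omega> rule: dec_induct)
  case base
  then show ?case using bound by simp
next
  case (step d)
  have "V < real (Suc d) * V" using \<open>0 < V\<close> step.hyps by simp
  then obtain A B where A: "open A" "convex A" "emeasure lebesgue A = ennreal V"
    and B: "open B" "convex B" "emeasure lebesgue B = ennreal (real (Suc d) * V - V)"
    and split: "(\<integral>\<^sup>+ x \<in> \<Omega>. h x \<partial>lebesgue) = (\<integral>\<^sup>+ x \<in> A. h x \<partial>lebesgue) + (\<integral>\<^sup>+ x \<in> B. h x \<partial>lebesgue)"
    using open_convex_split_nn_integral[OF h step.prems \<open>0 < V\<close>] by blast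
  have "real (Suc d) * V - V = real d * V" by (simp add: algebra_simps)
  then have "(\<integral>\<^sup>+ x \<in> B. h x \<partial>lebesgue) \<le> of_nat d * c"
    using step.IH[OF B(1,2)] B(3) by simp
  then have "(\<integral>\<^sup>+ x \<in> \<Omega>. h x \<partial>lebesgue) \<le> c + of_nat d * c"
    unfolding split using bound[OF A] by (rule add_mono[rotated])
  then show ?case by (simp add: distrib_right)
qed

theorem lemma2p3:
  fixes f :: "'a::euclidean_space \<Rightarrow> real" and p V :: real and d :: nat
  assumes "f \<in> borel_measurable lebesgue"
    and "norm_pV p V f < \<infinity>"
    and "1 \<le> p" and "0 < V" and "1 \<le> d"
  shows "norm_pV p (real d * V) f \<le> norm_pV p V f"
proof -
  obtain m where m: "norm_pV p V f = ennreal m" "0 \<le> m"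
    using assms(2) by (cases "norm_pV p V f") auto
  have "0 < p" "0 < real d * V" using assms by auto
  have bound_V: "(\<integral>\<^sup>+ x \<in> A. ennreal (\<bar>f x\<bar> powr p) \<partial>lebesgue) \<le> ennreal (V * m powr p)"
    if "open A" "convex A" "emeasure lebesgue A = ennreal V" for A
  proof -
    have "mean_p p f A \<le> ennreal m"
      unfolding m(1)[symmetric] norm_pV_def using that by (intro SUP_upper) auto
    then show ?thesis using mean_p_le_iff[OF that(3)] assms \<open>0 < p\<close> m(2) by blast
  qed
  show ?thesis
    unfolding m(1) norm_pV_def[of p "real d * V"]
  proof (intro SUP_least, clarify)
    fix \<Omega> :: "'a set"
    assume \<Omega>: "open \<Omega>" "convex \<Omega>" "emeasure lebesgue \<Omega> = ennreal (real d * V)"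
    have "(\<integral>\<^sup>+ x \<in> \<Omega>. ennreal (\<bar>f x\<bar> powr p) \<partial>lebesgue) \<le> of_nat d * ennreal (V * m powr p)"
      using assms(1) by (intro nn_integral_open_convex_multiple_le[OF _ \<open>0 < V\<close> \<open>1 \<le> d\<close> bound_V \<Omega>])
        measurable
    also have "\<dots> = ennreal (real d * V * m powr p)"
      by (simp add: ennreal_of_nat_eq_real_of_nat ennreal_mult'[symmetric] mult.assoc)
    finally show "mean_p p f \<Omega> \<le> ennreal m"
      using mean_p_le_iff[OF \<Omega>(3) \<open>0 < real d * V\<close> \<open>0 < p\<close> m(2)] by blast
  qed
qed

end
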